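(* Let $D\subset\mathbb{R}^2$ be a bounded domain invariant under rotation by $2\pi/N$ about the origin, for some even $N\ge4$. Let $T_\pm$ be invertible linear maps of $\mathbb{R}^2$ agreeing on the $x_1$-axis, with $T_\pm(\mathbb{R}^2_\pm)=\mathbb{R}^2_\pm$ and $\det T_+=\det T_-$, and let $T=T_+$ on $\{x_2\ge0\}$, $T=T_-$ on $\{x_2\le0\}$. Then \[ \frac14\big(\|T_+^{-1}\|_{HS}^2+\|T_-^{-1}\|_{HS}^2\big)=\frac{I_0(TD)}{A(TD)^3}\Big/\frac{I_0(D)}{A(D)^3}. \]
   Context: $\mathbb{R}^2_\pm=\{\pm x_2>0\}$. $A$ is area and $I_0(E)=\int_E|x|^2dx$ the moment of inertia about the origin. $\|M\|_{HS}=(\operatorname{tr}MM^\dagger)^{1/2}$. *)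

theory Defs
  imports "HOL-Analysis.Analysis"
begin

definition rot2 :: "real \<Rightarrow> real^2 \<Rightarrow> real^2" where
  "rot2 a x = (\<chi> i. if i = 1 then cos a * x$1 - sin a * x$2
                            else sin a * x$1 + cos a * x$2)"

definition upper_half :: "(real^2) set" where "upper_half = {x. x$2 > 0}"
definition lower_half :: "(real^2) set" where "lower_half = {x. x$2 < 0}"

definition area :: "(real^2) set \<Rightarrow> real" where "area E = measure lebesgue E"
definition inertia0 :: "(real^2) set \<Rightarrow> real" where
  "inertia0 E = integral E (\<lambda>x. norm x ^ 2)"

definition hs_norm :: "real^2^2 \<Rightarrow> real" where
  "hs_norm M = sqrt (\<Sum>i\<in>UNIV. \<Sum>j\<in>UNIV. (M$i$j)^2)"

definition pw_map :: "real^2^2 \<Rightarrow> real^2^2 \<Rightarrow> real^2 \<Rightarrow> real^2" where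
  "pw_map Tp Tm x = (if x$2 \<ge> 0 then Tp *v x else Tm *v x)"

end

theory Submission
  imports Defs
begin

(*
  Write A = \<integral>_D x1^2, B = \<integral>_D x2^2, C = \<integral>_D x1 x2 for the second moments of D.
  Invariance of D under a rotation by an angle \<theta> with sin \<theta> \<noteq> 0 (here \<theta> = 2\<pi>/N, N \<ge> 4)
  forces the moment matrix to be isotropic: A = B =: a and C = 0.  Since N is even, D is
  also invariant under rotation by \<pi>, i.e. D = -D, so the upper part U = D \<inter> {x2 \<ge> 0} and
  the lower part L = D \<inter> {x2 < 0} are exchanged by x \<mapsto> -x and each has isotropic moments
  a/2.  For any matrix M and any set S with isotropic moments a one has
  \<integral>_S |Mx|^2 = a \<parallel>M\<parallel>_HS^2, in particular I_0(S) = 2a.  The map T sends U and L linearly by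
  T+ and T- onto disjoint sets, so by the linear change of variables
  A(TD) = |det T| A(D) and I_0(TD) = |det T| (a/2) (\<parallel>T+\<parallel>^2 + \<parallel>T-\<parallel>^2).
  Finally \<parallel>M^-1\<parallel>_HS = \<parallel>M\<parallel>_HS / |det M| for 2x2 matrices, and both sides of the claim
  reduce to (\<parallel>T+\<parallel>^2 + \<parallel>T-\<parallel>^2) / (4 det T^2).
*)

lemma norm_sq_vec2: "norm (x::real^2) ^ 2 = x$1^2 + x$2^2"
  by (simp add: norm_vec_def L2_set_def UNIV_2)

lemma matrix_vector_mult_vec2: "((M::real^2^2) *v x) $ i = M$i$1 * x$1 + M$i$2 * x$2"
  by (simp add: matrix_vector_mult_def UNIV_2)

lemma hs_norm_sq: "hs_norm M ^ 2 = M$1$1^2 + M$1$2^2 + M$2$1^2 + M$2$2^2"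
  unfolding hs_norm_def by (simp add: UNIV_2 add_nonneg_nonneg)

text \<open>For a 2x2 matrix the inverse is the adjugate divided by the determinant, and the
  adjugate has the same entries up to sign and position; hence the HS norm scales by 1/|det|.\<close>

lemma hs_norm_matrix_inv:
  fixes M :: "real^2^2"
  assumes "invertible M"
  shows "hs_norm (matrix_inv M) ^ 2 = hs_norm M ^ 2 / (det M)^2"
proof -
  define d where "d = det M"
  have d: "d \<noteq> 0" using assms by (simp add: d_def invertible_det_nz)
  have inv: "M ** matrix_inv M = mat 1 \<and> matrix_inv M ** M = mat 1"
    using assms unfolding matrix_inv_def invertible_def by (rule someI_ex)
  define adj :: "real^2^2" where "adj = (\<chi> i j. if i = 1 then (if j = 1 then M$2$2/d else -M$1$2/d)
     else (if j = 1 then -M$2$1/d else M$1$1/d))"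
  have adj: "adj$1$1 = M$2$2/d" "adj$1$2 = -M$1$2/d" "adj$2$1 = -M$2$1/d" "adj$2$2 = M$1$1/d"
    by (simp_all add: adj_def)
  have "M$1$1 * M$2$2 - M$1$2 * M$2$1 = d" by (simp add: d_def det_2)
  then have "M ** adj = mat 1"
    using d by (simp add: vec_eq_iff forall_2 matrix_matrix_mult_def UNIV_2 mat_def adj field_simps)
  then have "matrix_inv M = adj"
    by (metis inv matrix_mul_assoc matrix_mul_lid matrix_mul_rid)
  then show ?thesis
    by (simp add: hs_norm_sq adj power_divide add_divide_distrib d_def)
qed

lemma linear_rot2: "linear (rot2 a)"
  unfolding rot2_def by (intro linearI) (auto simp: vec_eq_iff algebra_simps)

lemma det_rot2: "det (matrix (rot2 a)) = 1"
  by (simp add: det_2 matrix_def rot2_def axis_def power2_eq_square[symmetric])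

lemma rot2_add: "rot2 a (rot2 b x) = rot2 (a + b) x"
  by (simp add: rot2_def vec_eq_iff cos_add sin_add algebra_simps)

lemma rot2_pi: "rot2 pi x = - x"
  by (simp add: rot2_def vec_eq_iff forall_2)

lemma rot2_multiple_invariant:
  assumes "rot2 a ` D = D"
  shows "rot2 (real k * a) ` D = D"
proof (induction k)
  case 0
  have "rot2 0 = id" by (simp add: rot2_def fun_eq_iff vec_eq_iff forall_2)
  then show ?case by simp
next
  case (Suc k)
  have "rot2 (real (Suc k) * a) = rot2 a \<circ> rot2 (real k * a)"
    by (simp add: fun_eq_iff rot2_add algebra_simps)
  then show ?case using Suc assms by (metis image_comp)
qed

lemma rot2_even_order_symmetric:
  assumes "even N" "N > 0" "rot2 (2 * pi / real N) ` D = D"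
  shows "uminus ` D = D"
proof -
  obtain m where m: "N = 2 * m" using assms(1) by blast
  have "real m * (2 * pi / real N) = pi" using assms(2) by (simp add: m field_simps)
  then have "rot2 pi ` D = D" using rot2_multiple_invariant[OF assms(3), of m] by simp
  then show ?thesis by (simp add: rot2_pi)
qed

lemma continuous_absolutely_integrable_bounded:
  fixes f :: "'a::euclidean_space \<Rightarrow> real"
  assumes "continuous_on UNIV f" "S \<in> lmeasurable" "bounded S"
  shows "f absolutely_integrable_on S"
proof -
  have "compact (f ` closure S)"
    using assms by (intro compact_continuous_image) (auto intro: continuous_on_subset simp: compact_closure)
  then have "bounded (f ` S)"
    by (meson bounded_subset closure_subset compact_imp_bounded image_mono)
  then obtain B where B: "\<And>x. x \<in> S \<Longrightarrow> norm (f x) \<le> B"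
    by (auto simp: bounded_iff)
  show ?thesis
  proof (rule measurable_bounded_by_integrable_imp_absolutely_integrable)
    show "f \<in> borel_measurable (lebesgue_on S)"
      using assms by (intro continuous_imp_measurable_on_sets_lebesgue) (auto intro: continuous_on_subset)
    show "(\<lambda>x. B) integrable_on S" using assms integrable_on_const by blast
  qed (use assms B in auto)
qed

lemma continuous_integrable_bounded:
  fixes f :: "'a::euclidean_space \<Rightarrow> real"
  assumes "continuous_on UNIV f" "S \<in> lmeasurable" "bounded S"
  shows "f integrable_on S"
  using continuous_absolutely_integrable_bounded[OF assms] set_lebesgue_integral_eq_integral(1) by blast

lemma integral_linear_image:
  fixes f :: "real^'n::{finite,wellorder} \<Rightarrow> real"
  assumes "linear g" "continuous_on UNIV f" "S \<in> lmeasurable" "bounded S"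
  shows "integral (g ` S) f = \<bar>det (matrix g)\<bar> * integral S (f \<circ> g)"
proof -
  have "continuous_on UNIV g"
    using assms(1) linear_continuous_on linear_conv_bounded_linear by blast
  then have "continuous_on UNIV (f \<circ> g)"
    by (rule continuous_on_compose) (rule continuous_on_subset[OF assms(2)], simp)
  then have "((\<lambda>x. vec (f x) :: real^1) \<circ> g) absolutely_integrable_on S"
    using continuous_absolutely_integrable_bounded assms(3,4)
    by (simp add: absolutely_integrable_on_1_iff o_def)
  then have "integral (g ` S) (\<lambda>x. vec (f x) :: real^1) $ 1
       = (\<bar>det (matrix g)\<bar> *\<^sub>R integral S ((\<lambda>x. vec (f x) :: real^1) \<circ> g)) $ 1"
    using assms(1) by (subst integral_change_of_variables_linear) auto
  moreover have v: "\<And>h T. integral T (\<lambda>x. vec (h x) :: real^1) $ 1 = integral T h"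
    by (subst integral_on_1_eq) simp
  ultimately show ?thesis
    by (simp add: v o_def)
qed

lemma integral_quadratic_form:
  fixes S :: "(real^2) set"
  assumes "S \<in> lmeasurable" "bounded S"
  shows "integral S (\<lambda>x. p * x$1^2 + r * (x$1 * x$2) + t * x$2^2)
     = p * integral S (\<lambda>x. x$1^2) + r * integral S (\<lambda>x. x$1 * x$2) + t * integral S (\<lambda>x. x$2^2)"
proof -
  have int: "f integrable_on S" if "continuous_on UNIV f" for f :: "real^2 \<Rightarrow> real"
    using continuous_integrable_bounded[OF that assms] .
  have a: "(\<lambda>x. p * x$1^2) integrable_on S" "(\<lambda>x. r * (x$1 * x$2)) integrable_on S"
    "(\<lambda>x. t * x$2^2) integrable_on S"
    by (intro int continuous_intros)+
  have "integral S (\<lambda>x. p * x$1^2 + r * (x$1 * x$2) + t * x$2^2)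
      = integral S (\<lambda>x. p * x$1^2) + integral S (\<lambda>x. r * (x$1 * x$2)) + integral S (\<lambda>x. t * x$2^2)"
    using a by (simp add: integral_add integrable_add)
  then show ?thesis by simp
qed

definition isotropic_moments :: "(real^2) set \<Rightarrow> real \<Rightarrow> bool" where
  "isotropic_moments S a \<longleftrightarrow>
     integral S (\<lambda>x. x$1^2) = a \<and> integral S (\<lambda>x. x$2^2) = a \<and> integral S (\<lambda>x. x$1 * x$2) = 0"

text \<open>Invariance under a rotation that is not a multiple of \<pi> makes the moments isotropic:
  the moment matrix commutes with the rotation, which has no real eigenvector.\<close>

lemma rotation_invariant_isotropic:
  fixes D :: "(real^2) set"
  assumes D: "D \<in> lmeasurable" "bounded D" "rot2 \<theta> ` D = D" and "sin \<theta> \<noteq> 0"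
  shows "isotropic_moments D (integral D (\<lambda>x. x$1^2))"
proof -
  define c s where "c = cos \<theta>" and "s = sin \<theta>"
  define A B C where "A = integral D (\<lambda>x. x$1^2)" and "B = integral D (\<lambda>x. x$2^2)"
    and "C = integral D (\<lambda>x. x$1 * x$2)"
  have rotate: "integral D q = integral D (\<lambda>x. q (rot2 \<theta> x))" if "continuous_on UNIV q" for q :: "real^2 \<Rightarrow> real"
    using integral_linear_image[OF linear_rot2 that D(1,2), of \<theta>] D(3) by (simp add: det_rot2 o_def)
  have "A = integral D (\<lambda>x. c^2 * x$1^2 + (- 2 * c * s) * (x$1 * x$2) + s^2 * x$2^2)"
    unfolding A_def
    by (subst rotate, intro continuous_intros, rule integral_cong)
      (simp add: rot2_def c_def s_def power2_eq_square algebra_simps)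
  also have "\<dots> = c^2 * A + (- 2 * c * s) * C + s^2 * B"
    unfolding A_def B_def C_def by (rule integral_quadratic_form[OF D(1,2)])
  finally have e1: "A = c^2 * A + (- 2 * c * s) * C + s^2 * B" .
  have "C = integral D (\<lambda>x. (c * s) * x$1^2 + (c^2 - s^2) * (x$1 * x$2) + (- c * s) * x$2^2)"
    unfolding C_def
    by (subst rotate, intro continuous_intros, rule integral_cong)
      (simp add: rot2_def c_def s_def power2_eq_square algebra_simps)
  also have "\<dots> = (c * s) * A + (c^2 - s^2) * C + (- c * s) * B"
    unfolding A_def B_def C_def by (rule integral_quadratic_form[OF D(1,2)])
  finally have e2: "C = (c * s) * A + (c^2 - s^2) * C + (- c * s) * B" .
  have cs: "c^2 = 1 - s^2" by (simp add: c_def s_def cos_squared_eq)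
  have "s \<noteq> 0" using assms(4) by (simp add: s_def)
  have "s * (s * (A - B) + 2 * c * C) = 0"
    using e1 unfolding cs by (simp add: power2_eq_square algebra_simps)
  then have f1: "s * (A - B) = -2 * c * C" using \<open>s \<noteq> 0\<close> by simp
  have "s * (2 * s * C - c * (A - B)) = 0"
    using e2 unfolding cs by (simp add: power2_eq_square algebra_simps)
  then have f2: "2 * s * C = c * (A - B)" using \<open>s \<noteq> 0\<close> by simp
  have "A - B = (A - B) * (s^2 + c^2)" by (simp add: c_def s_def)
  also have "\<dots> = s * (s * (A - B)) + c * (c * (A - B))"
    by (simp add: power2_eq_square algebra_simps)
  also have "\<dots> = 0" unfolding f1 f2[symmetric] by (simp add: algebra_simps)
  finally have "A - B = 0" .
  then show ?thesis
    using f2 \<open>s \<noteq> 0\<close> by (simp add: isotropic_moments_def A_def B_def C_def)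
qed

lemma lmeasurable_halves:
  fixes D :: "(real^2) set"
  assumes "D \<in> lmeasurable"
  shows "D \<inter> {x. 0 \<le> x$2} \<in> lmeasurable" "D \<inter> {x. x$2 < 0} \<in> lmeasurable"
proof -
  have "closed {x::real^2. 0 \<le> x$2}" "open {x::real^2. x$2 < 0}"
    by (auto intro!: closed_Collect_le open_Collect_less continuous_intros)
  then have "{x::real^2. 0 \<le> x$2} \<in> sets lebesgue" "{x::real^2. x$2 < 0} \<in> sets lebesgue"
    by (metis borel_closed borel_open sets_completionI_sets sets_lborel)+
  then show "D \<inter> {x. 0 \<le> x$2} \<in> lmeasurable" "D \<inter> {x. x$2 < 0} \<in> lmeasurable"
    using assms by (auto intro: fmeasurable_Int_fmeasurable)
qed

text \<open>For a point-symmetric set, the upper and lower halves carry equal shares of the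
  integral of any even continuous function (they are swapped by x \<mapsto> -x, up to the
  negligible line x2 = 0).\<close>

lemma integral_symmetric_halves:
  fixes D :: "(real^2) set" and q :: "real^2 \<Rightarrow> real"
  assumes D: "D \<in> lmeasurable" "bounded D" "uminus ` D = D"
    and q: "continuous_on UNIV q" "\<And>x. q (-x) = q x"
  shows "integral (D \<inter> {x. 0 \<le> x$2}) q = integral D q / 2"
    "integral (D \<inter> {x. x$2 < 0}) q = integral D q / 2"
proof -
  define U L where "U = D \<inter> {x. 0 \<le> x$2}" and "L = D \<inter> {x. x$2 < 0}"
  have m: "U \<in> lmeasurable" "L \<in> lmeasurable"
    using lmeasurable_halves[OF D(1)] by (simp_all add: U_def L_def)
  have b: "bounded U" "bounded L" by (auto simp: U_def L_def intro: bounded_Int D(2))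
  have neg: "\<And>x. x \<in> D \<Longrightarrow> -x \<in> D" using D(3) by force
  have "D \<inter> {x. 0 < x$2} = rot2 pi ` L"
    unfolding rot2_pi L_def using neg by (force simp: image_iff intro: bexI[where x = "- _"])
  then have "integral (D \<inter> {x. 0 < x$2}) q = integral L q"
    using integral_linear_image[OF linear_rot2 q(1) m(2) b(2), of pi]
    by (simp add: det_rot2 o_def rot2_pi q(2))
  moreover have "integral U q = integral (D \<inter> {x. 0 < x$2}) q"
    by (rule integral_spike_set; rule negligible_subset[OF negligible_standard_hyperplane_cart[of 2]])
      (auto simp: U_def)
  moreover have "integral D q = integral U q + integral L q"
  proof -
    have "D = U \<union> L" "U \<inter> L = {}" by (auto simp: U_def L_def)
    then show ?thesis
      using continuous_integrable_bounded[OF q(1)] m b by (simp add: integral_Un)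
  qed
  ultimately show "integral U q = integral D q / 2" "integral L q = integral D q / 2"
    by auto
qed

lemma isotropic_moments_halves:
  fixes D :: "(real^2) set"
  assumes "D \<in> lmeasurable" "bounded D" "uminus ` D = D" "isotropic_moments D a"
  shows "isotropic_moments (D \<inter> {x. 0 \<le> x$2}) (a / 2)"
    "isotropic_moments (D \<inter> {x. x$2 < 0}) (a / 2)"
proof -
  have cont: "continuous_on UNIV (\<lambda>x::real^2. x$1^2)" "continuous_on UNIV (\<lambda>x::real^2. x$2^2)"
    "continuous_on UNIV (\<lambda>x::real^2. x$1 * x$2)" by (intro continuous_intros)+
  note halves = integral_symmetric_halves[OF assms(1-3)]
  show "isotropic_moments (D \<inter> {x. 0 \<le> x$2}) (a / 2)"
    "isotropic_moments (D \<inter> {x. x$2 < 0}) (a / 2)"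
    using halves[OF cont(1)] halves[OF cont(2)] halves[OF cont(3)] assms(4)
    by (simp_all add: isotropic_moments_def)
qed

lemma integral_norm_sq_matrix:
  fixes S :: "(real^2) set" and M :: "real^2^2"
  assumes "isotropic_moments S a" "S \<in> lmeasurable" "bounded S"
  shows "integral S (\<lambda>x. norm (M *v x) ^ 2) = a * hs_norm M ^ 2"
proof -
  have "integral S (\<lambda>x. norm (M *v x) ^ 2)
      = integral S (\<lambda>x. (M$1$1^2 + M$2$1^2) * x$1^2 + (2 * (M$1$1 * M$1$2 + M$2$1 * M$2$2)) * (x$1 * x$2)
                        + (M$1$2^2 + M$2$2^2) * x$2^2)"
    by (rule integral_cong) (simp only: norm_sq_vec2, simp add: matrix_vector_mult_vec2 power2_eq_square algebra_simps)
  also have "\<dots> = (M$1$1^2 + M$2$1^2) * a + (2 * (M$1$1 * M$1$2 + M$2$1 * M$2$2)) * 0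
                     + (M$1$2^2 + M$2$2^2) * a"
    using assms unfolding isotropic_moments_def by (simp only: integral_quadratic_form)
  also have "\<dots> = a * hs_norm M ^ 2"
    by (simp add: hs_norm_sq algebra_simps)
  finally show ?thesis .
qed

corollary inertia0_isotropic:
  assumes "isotropic_moments S a" "S \<in> lmeasurable" "bounded S"
  shows "inertia0 S = 2 * a"
proof -
  have "hs_norm (mat 1) ^ 2 = 2" by (simp add: hs_norm_sq mat_def)
  then show ?thesis
    using integral_norm_sq_matrix[OF assms, of "mat 1"] by (simp add: inertia0_def)
qed

text \<open>A matrix mapping the open upper half-plane into itself is upper triangular with
  positive (2,2) entry, hence it also preserves the closed upper half-plane.\<close>

lemma upper_half_closed_invariant:
  fixes M :: "real^2^2"
  assumes "(\<lambda>x. M *v x) ` upper_half \<subseteq> upper_half" "0 \<le> x$2"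
  shows "0 \<le> (M *v x)$2"
proof -
  have up: "\<And>y. 0 < y$2 \<Longrightarrow> 0 < (M *v y)$2"
    using assms(1) unfolding upper_half_def by blast
  have "M$2$1 = 0"
  proof (rule ccontr)
    assume "M$2$1 \<noteq> 0"
    moreover have "0 < (M *v vector [- (\<bar>M$2$2\<bar> + 1) / M$2$1, 1])$2" by (rule up) simp
    ultimately show False by (simp add: matrix_vector_mult_vec2)
  qed
  moreover have "0 < M$2$2" using up[of "vector [0, 1]"] by (simp add: matrix_vector_mult_vec2)
  ultimately show ?thesis using assms(2) by (simp add: matrix_vector_mult_vec2)
qed

lemma integral_union_linear_images:
  fixes f :: "real^'n::{finite,wellorder} \<Rightarrow> real"
  assumes "linear g" "linear h" "continuous_on UNIV f"
    and "U \<in> lmeasurable" "bounded U" "L \<in> lmeasurable" "bounded L"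
    and "g ` U \<inter> h ` L = {}"
  shows "integral (g ` U \<union> h ` L) f
       = \<bar>det (matrix g)\<bar> * integral U (f \<circ> g) + \<bar>det (matrix h)\<bar> * integral L (f \<circ> h)"
proof -
  have "g ` U \<in> lmeasurable" "h ` L \<in> lmeasurable" "bounded (g ` U)" "bounded (h ` L)"
    using assms by (auto intro: measurable_linear_image bounded_linear_image simp: linear_conv_bounded_linear)
  then have "integral (g ` U \<union> h ` L) f = integral (g ` U) f + integral (h ` L) f"
    using continuous_integrable_bounded[OF assms(3)] assms(8) by (simp add: integral_Un)
  then show ?thesis
    using integral_linear_image[OF assms(1,3-5)] integral_linear_image[OF assms(2,3,6,7)] by simp
qed

lemma area_union_linear_images:
  fixes g h :: "real^2 \<Rightarrow> real^2"
  assumes "linear g" "linear h"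
    and "U \<in> lmeasurable" "bounded U" "L \<in> lmeasurable" "bounded L"
    and "g ` U \<inter> h ` L = {}"
  shows "area (g ` U \<union> h ` L) = \<bar>det (matrix g)\<bar> * area U + \<bar>det (matrix h)\<bar> * area L"
proof -
  have "g ` U \<union> h ` L \<in> lmeasurable"
    using assms by (intro fmeasurable.Un measurable_linear_image) auto
  then show ?thesis
    using integral_union_linear_images[OF assms(1,2) continuous_on_const assms(3-7), of 1]
    by (simp add: area_def lmeasure_integral assms o_def)
qed

text \<open>Positivity of area and moment of inertia of a nonempty bounded open set: it contains
  a closed ball of positive measure on which |x| is bounded away from zero.\<close>

lemma open_contains_ball_off_origin:
  fixes D :: "(real^2) set"
  assumes "open D" "D \<noteq> {}"
  obtains c \<rho> where "c \<noteq> 0" "0 < \<rho>" "cball c \<rho> \<subseteq> D" "\<rho> \<le> norm c / 2"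
proof -
  obtain c0 r where r: "0 < r" "ball c0 r \<subseteq> D" using assms openE by (metis ex_in_conv)
  define c where "c = (if c0 = 0 then c0 + (r/2) *\<^sub>R axis 1 1 else c0)"
  have "c \<in> ball c0 r" using r by (auto simp: c_def dist_norm)
  then obtain r0 where r0: "0 < r0" "ball c r0 \<subseteq> ball c0 r" using openE[OF open_ball] by blast
  have "c \<noteq> 0" using r by (auto simp: c_def axis_eq_0_iff)
  moreover have "cball c (min (r0/2) (norm c / 2)) \<subseteq> ball c r0" using r0 by auto
  ultimately show ?thesis
    using that[of c "min (r0/2) (norm c / 2)"] r0 r by auto
qed

lemma area_inertia0_pos:
  fixes D :: "(real^2) set"
  assumes "open D" "D \<noteq> {}" "bounded D"
  shows "0 < area D" "0 < inertia0 D"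
proof -
  obtain c \<rho> where cr: "c \<noteq> 0" "0 < \<rho>" "cball c \<rho> \<subseteq> D" "\<rho> \<le> norm c / 2"
    using open_contains_ball_off_origin[OF assms(1,2)] .
  have D: "D \<in> lmeasurable" using assms lmeasurable_open by blast
  have ball: "0 < measure lebesgue (cball c \<rho>)"
    using content_cball_pos[OF cr(2), of c] by (simp add: measure_completion)
  also have "\<dots> \<le> area D"
    using cr(3) D unfolding area_def by (intro measure_mono_fmeasurable) auto
  finally show "0 < area D" .
  have nsq: "continuous_on UNIV (\<lambda>x::real^2. norm x ^ 2)" by (intro continuous_intros)
  have "measure lebesgue (cball c \<rho>) * (norm c / 2)^2 = integral (cball c \<rho>) (\<lambda>x. (norm c / 2)^2)"
    using lmeasure_integral[OF lmeasurable_cball, of c \<rho>]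
      integral_mult[OF integrable_on_const[OF lmeasurable_cball], of "(norm c / 2)^2" c \<rho> 1]
    by (simp add: mult.commute)
  also have "\<dots> \<le> integral (cball c \<rho>) (\<lambda>x. norm x ^ 2)"
  proof (rule integral_le)
    fix x assume "x \<in> cball c \<rho>"
    then have "norm c / 2 \<le> norm x"
      using cr(4) norm_triangle_sub[of c x] by (simp add: dist_norm)
    then show "(norm c / 2)^2 \<le> norm x ^ 2" by (intro power_mono) auto
  qed (auto intro: continuous_integrable_bounded[OF nsq] integrable_on_const)
  also have "\<dots> \<le> inertia0 D" unfolding inertia0_def
    by (rule integral_subset_le[OF cr(3)]) (auto intro: continuous_integrable_bounded[OF nsq] D assms(3))
  finally show "0 < inertia0 D"
    using ball cr(1) by (smt (verit) mult_pos_pos zero_less_norm_iff zero_less_power divide_pos_pos)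
qed

lemma pw_map_image_split:
  assumes "(\<lambda>x. Tp *v x) ` upper_half \<subseteq> upper_half" "(\<lambda>x. Tm *v x) ` lower_half \<subseteq> lower_half"
  shows "pw_map Tp Tm ` D = (\<lambda>x. Tp *v x) ` (D \<inter> {x. 0 \<le> x$2}) \<union> (\<lambda>x. Tm *v x) ` (D \<inter> {x. x$2 < 0})"
    "(\<lambda>x. Tp *v x) ` (D \<inter> {x. 0 \<le> x$2}) \<inter> (\<lambda>x. Tm *v x) ` (D \<inter> {x. x$2 < 0}) = {}"
proof -
  show "pw_map Tp Tm ` D = (\<lambda>x. Tp *v x) ` (D \<inter> {x. 0 \<le> x$2}) \<union> (\<lambda>x. Tm *v x) ` (D \<inter> {x. x$2 < 0})"
    by (auto simp: pw_map_def image_def)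
  have "0 \<le> (Tp *v x)$2" if "0 \<le> x$2" for x
    using upper_half_closed_invariant[OF assms(1) that] .
  moreover have "(Tm *v x)$2 < 0" if "x$2 < 0" for x
    using assms(2) that unfolding lower_half_def by blast
  ultimately show "(\<lambda>x. Tp *v x) ` (D \<inter> {x. 0 \<le> x$2}) \<inter> (\<lambda>x. Tm *v x) ` (D \<inter> {x. x$2 < 0}) = {}"
    by force
qed

lemma pw_map_area_inertia0:
  fixes D :: "(real^2) set" and Tp Tm :: "real^2^2"
  assumes D: "D \<in> lmeasurable" "bounded D" "uminus ` D = D" "isotropic_moments D a"
    and T: "(\<lambda>x. Tp *v x) ` upper_half \<subseteq> upper_half" "(\<lambda>x. Tm *v x) ` lower_half \<subseteq> lower_half"
    and det: "det Tp = d" "det Tm = d"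
  shows "area (pw_map Tp Tm ` D) = \<bar>d\<bar> * area D"
    "inertia0 (pw_map Tp Tm ` D) = \<bar>d\<bar> * (a / 2) * (hs_norm Tp ^ 2 + hs_norm Tm ^ 2)"
proof -
  define U L where "U = D \<inter> {x. 0 \<le> x$2}" and "L = D \<inter> {x. x$2 < 0}"
  have UL: "U \<in> lmeasurable" "bounded U" "L \<in> lmeasurable" "bounded L"
    using lmeasurable_halves[OF D(1)] D(2) by (auto simp: U_def L_def)
  note iso_halves = isotropic_moments_halves[OF D, folded U_def L_def]
  note split = pw_map_image_split[OF T, of D, folded U_def L_def]
  have "U \<inter> L = {}" by (auto simp: U_def L_def)
  have "area (pw_map Tp Tm ` D) = \<bar>d\<bar> * area (id ` U \<union> id ` L)"
    using area_union_linear_images[OF _ _ UL, of "\<lambda>x. Tp *v x" "\<lambda>x. Tm *v x"]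
      area_union_linear_images[OF linear_id linear_id UL] \<open>U \<inter> L = {}\<close> split det
    by (simp add: disjoint_iff algebra_simps)
  also have "id ` U \<union> id ` L = D" by (auto simp: U_def L_def)
  finally show "area (pw_map Tp Tm ` D) = \<bar>d\<bar> * area D" .
  show "inertia0 (pw_map Tp Tm ` D) = \<bar>d\<bar> * (a / 2) * (hs_norm Tp ^ 2 + hs_norm Tm ^ 2)"
    using integral_union_linear_images[OF _ _ _ UL, of "\<lambda>x. Tp *v x" "\<lambda>x. Tm *v x" "\<lambda>x. norm x ^ 2"]
      integral_norm_sq_matrix[OF iso_halves(1) UL(1,2)] integral_norm_sq_matrix[OF iso_halves(2) UL(3,4)]
      split det
    by (simp add: inertia0_def o_def algebra_simps continuous_intros)
qed

theorem mainTheorem12: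
  fixes D :: "(real^2) set" and N :: nat and Tp Tm :: "real^2^2"
  assumes "open D" and "connected D" and "D \<noteq> {}" and "bounded D"
    and "even N" and "N \<ge> 4"
    and "rot2 (2 * pi / real N) ` D = D"
    and "invertible Tp" and "invertible Tm"
    and "\<And>t. Tp *v (vector [t, 0]) = Tm *v (vector [t, 0])"
    and "(\<lambda>x. Tp *v x) ` upper_half = upper_half"
    and "(\<lambda>x. Tm *v x) ` lower_half = lower_half"
    and "det Tp = det Tm"
  shows "(hs_norm (matrix_inv Tp) ^ 2 + hs_norm (matrix_inv Tm) ^ 2) / 4
         = (inertia0 (pw_map Tp Tm ` D) / area (pw_map Tp Tm ` D) ^ 3)
           / (inertia0 D / area D ^ 3)"
proof -
  define a d where "a = integral D (\<lambda>x. x$1^2)" and "d = det Tp"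
  have D: "D \<in> lmeasurable" using assms(1,4) lmeasurable_open by blast
  have "sin (2 * pi / real N) \<noteq> 0"
    using assms(6) by (intro order.strict_implies_not_eq[symmetric] sin_gt_zero) (auto simp: field_simps)
  then have iso: "isotropic_moments D a"
    using rotation_invariant_isotropic[OF D assms(4,7)] by (simp add: a_def)
  moreover have "uminus ` D = D" using rot2_even_order_symmetric assms(5-7) by simp
  moreover have "det Tm = d" using assms(13) by (simp add: d_def)
  ultimately have image: "area (pw_map Tp Tm ` D) = \<bar>d\<bar> * area D"
    "inertia0 (pw_map Tp Tm ` D) = \<bar>d\<bar> * (a / 2) * (hs_norm Tp ^ 2 + hs_norm Tm ^ 2)"
    using pw_map_area_inertia0[OF D assms(4) _ _ equalityD1[OF assms(11)] equalityD1[OF assms(12)]]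
    by (auto simp: d_def)
  have inverses: "(hs_norm (matrix_inv Tp) ^ 2 + hs_norm (matrix_inv Tm) ^ 2) / 4
      = (hs_norm Tp ^ 2 + hs_norm Tm ^ 2) / (4 * d^2)"
    using hs_norm_matrix_inv assms(8,9,13) by (simp add: d_def add_divide_distrib)
  have "d \<noteq> 0" using assms(8) by (simp add: d_def invertible_det_nz)
  moreover have "0 < area D" "0 < a"
    using area_inertia0_pos[OF assms(1,3,4)] inertia0_isotropic[OF iso D assms(4)] by auto
  ultimately show ?thesis
    unfolding inverses image inertia0_isotropic[OF iso D assms(4)]
    by (simp add: field_simps power2_eq_square power3_eq_cube abs_mult_self_eq)
qed

end
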